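(* Let $q\in\mathbb{N}$, $q>1$. For $P\ge2$, $N\ge1$ and integers $n>2$ let \[ \Delta_{P,N}^{(2,3)}(n)=\sum_{\substack{d,v\ge1:\ dv^2=n^2-4\\ p\mid v\Rightarrow p\le P}}\frac1v\sum_{\substack{l\ge1:\\ p\mid l\Rightarrow p\le P}}\frac{\chi_d(l)}{l}\big(e^{-l/N}-1\big), \] where $p$ denotes primes. Then for $P\ge2$ and $x,N\ge1$, \[ \Big(\frac1x\sum_{2<n\le x}\big|\Delta_{P,N}^{(2,3)}(n)\big|^{2q}\Big)^{1/(2q)}\ll N^{-1/2}+\sum_{\substack{l>\sqrt N:\\ p\mid l\Rightarrow p\le P}}\frac1l . \]
   Context: Sums over $d$ run over positive non-square discriminants, i.e. positive integers $d$, not perfect squares, with $d\equiv0,1\pmod4$; $v$ runs over positive integers. For such $d$, $\chi_d:\mathbb{Z}\to\{0,\pm1\}$ is the completely multiplicative function with: for odd primes $p$, $\chi_d(p)=0$ if $p\mid d$, $1$ if $p\nmid d$ and $x^2\equiv d\pmod p$ is solvable, $-1$ if insolvable; $\chi_d(2)=1,-1,0$ according as $d\equiv1\pmod 8$, $d\equiv5\pmod8$, $d\equiv0\pmod4$; $\chi_d(-1)=1$. *)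

theory Defs
  imports "HOL-Analysis.Analysis" "HOL-Number_Theory.Number_Theory"
begin

definition is_disc :: "int \<Rightarrow> bool" where
  "is_disc d \<longleftrightarrow> d > 0 \<and> \<not> (\<exists>m::int. d = m^2) \<and> (d mod 4 = 0 \<or> d mod 4 = 1)"

definition chi_prime :: "int \<Rightarrow> nat \<Rightarrow> int" where
  "chi_prime d p =
     (if p = 2 then (if d mod 8 = 1 then 1 else if d mod 8 = 5 then -1 else 0)
      else if int p dvd d then 0
      else if QuadRes (int p) d then 1 else -1)"

definition chi :: "int \<Rightarrow> nat \<Rightarrow> int" where
  "chi d l = (if l = 0 then 0 else
     (\<Prod>p\<in>prime_factors l. chi_prime d p ^ multiplicity p l))"

definition smooth :: "real \<Rightarrow> nat \<Rightarrow> bool" where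
  "smooth P l \<longleftrightarrow> (\<forall>p::nat. prime p \<longrightarrow> p dvd l \<longrightarrow> real p \<le> P)"

definition Delta23 :: "real \<Rightarrow> real \<Rightarrow> nat \<Rightarrow> real" where
  "Delta23 P N n =
     (\<Sum>v\<in>{v::nat. 0 < v \<and> int (v^2) dvd (int n^2 - 4) \<and> smooth P v
                    \<and> is_disc ((int n^2 - 4) div int (v^2))}.
        (1 / real v) *
        infsum (\<lambda>l::nat. real_of_int (chi ((int n^2 - 4) div int (v^2)) l) / real l
                          * (exp (- real l / N) - 1))
               {l. 0 < l \<and> smooth P l})"

end

theory Submission
  imports Defs
begin

(* Splitting the smoothed character sum at sqrt N (terms of size at most 1/N below, at most
   1/l above) bounds every inner series by N^(-1/2) plus the tail of 1/l over the P-smooth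
   l > sqrt N, uniformly in the discriminant. Hence |Delta(n)| is at most this bound times
   F(n), the sum of 1/v over v with v^2 | n^2 - 4, and it remains to bound the mean of F^k.
   By Hoelder, F(n)^k <= zeta(s)^(k-1) * (sum of v^(-gamma)) with s slightly above 1 and
   gamma slightly above 1/2. Writing v^2 = x*y with x | n - 2, y | n + 2, one of x, y is a
   divisor d >= v of v^2; the v with d | v^2 are multiples of some r >= sqrt d, and only
   about X/d of the n <= X have d | n - 2 or d | n + 2, so summing over d converges. *)

lemma summable_on_inverse_smooth:
  "(\<lambda>l::nat. 1 / real l) summable_on {l. 0 < l \<and> smooth P l}"
proof -
  define Q where "Q = {p::nat. prime p \<and> real p \<le> P}"
  have "Q \<subseteq> {..nat \<lceil>P\<rceil>}"
    unfolding Q_def by (auto simp: le_nat_iff) linarith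
  then have Q: "finite Q"
    by (rule finite_subset) simp
  define \<phi> where "\<phi> g = (\<Prod>p\<in>Q. p ^ g p)" for g :: "nat \<Rightarrow> nat"
  have multiplicity_\<phi>: "multiplicity p (\<phi> g) = g p" if "p \<in> Q" for p g
    unfolding \<phi>_def using that Q
    by (subst multiplicity_prod_prime_powers) (auto simp: Q_def)
  have inj: "inj_on \<phi> (PiE Q (\<lambda>_. UNIV))"
  proof (rule inj_onI)
    fix g h assume "g \<in> PiE Q (\<lambda>_. UNIV)" "h \<in> PiE Q (\<lambda>_. UNIV)" "\<phi> g = \<phi> h"
    then show "g = h"
      by (metis PiE_ext multiplicity_\<phi>)
  qed
  have smooth_image: "{l. 0 < l \<and> smooth P l} \<subseteq> \<phi> ` PiE Q (\<lambda>_. UNIV)"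
  proof
    fix l assume "l \<in> {l. 0 < l \<and> smooth P l}"
    then have l: "0 < l" "prime_factors l \<subseteq> Q"
      by (auto simp: Q_def smooth_def in_prime_factors_iff)
    have "\<phi> (restrict (\<lambda>p. multiplicity p l) Q) = (\<Prod>p\<in>Q. p ^ multiplicity p l)"
      by (simp add: \<phi>_def)
    also have "\<dots> = (\<Prod>p\<in>prime_factors l. p ^ multiplicity p l)"
    proof (rule prod.mono_neutral_right[OF Q l(2)], rule ballI)
      fix p assume "p \<in> Q - prime_factors l"
      then show "p ^ multiplicity p l = 1"
        using l by (auto simp: Q_def in_prime_factors_iff not_dvd_imp_multiplicity_0)
    qed
    also have "\<dots> = l"
      using l by (simp add: prod_prime_factors)
    finally have "l = \<phi> (restrict (\<lambda>p. multiplicity p l) Q)" ..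
    moreover have "restrict (\<lambda>p. multiplicity p l) Q \<in> PiE Q (\<lambda>_. UNIV)"
      by simp
    ultimately show "l \<in> \<phi> ` PiE Q (\<lambda>_. UNIV)"
      by blast
  qed
  \<comment> \<open>the reciprocals of the \<open>\<phi> g\<close> form a product of finitely many geometric series\<close>
  have geometric: "Infinite_Set_Sum.abs_summable_on (\<lambda>e. (1 / real p) ^ e) UNIV" if "p \<in> Q" for p
  proof -
    have "real p > 1"
      using that prime_gt_1_nat by (simp add: Q_def)
    then have "summable (\<lambda>e. (1 / real p) ^ e)"
      by (intro summable_geometric) simp
    then show ?thesis
      by (simp add: abs_summable_on_nat_iff')
  qed
  have "Infinite_Set_Sum.abs_summable_on (\<lambda>g. \<Prod>p\<in>Q. (1 / real p) ^ g p) (PiE Q (\<lambda>_. UNIV))"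
    by (rule abs_summable_on_prod_PiE[OF Q _ geometric]) simp
  then have "(\<lambda>g. \<Prod>p\<in>Q. (1 / real p) ^ g p) summable_on PiE Q (\<lambda>_. UNIV)"
    by (subst summable_on_iff_abs_summable_on_real) (rule abs_summable_equivalent[THEN iffD2])
  then have "((\<lambda>l::nat. 1 / real l) \<circ> \<phi>) summable_on PiE Q (\<lambda>_. UNIV)"
    by (simp add: \<phi>_def power_one_over prod_dividef comp_def)
  then have "(\<lambda>l::nat. 1 / real l) summable_on \<phi> ` PiE Q (\<lambda>_. UNIV)"
    using summable_on_reindex[OF inj] by blast
  then show ?thesis
    using smooth_image summable_on_subset_banach by blast
qed

lemma abs_chi_le_1: "\<bar>chi d l\<bar> \<le> 1"
proof -
  have "\<bar>chi_prime d p\<bar> \<le> 1" for p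
    unfolding chi_prime_def by auto
  then show ?thesis
    unfolding chi_def by (auto simp: abs_prod power_abs intro!: prod_le_1 power_le_one)
qed

lemma abs_smoothing_term_le:
  fixes c N :: real and l :: nat
  assumes "\<bar>c\<bar> \<le> 1" "N > 0"
  shows "\<bar>c / real l * (exp (- real l / N) - 1)\<bar> \<le> 1 / real l"
    and "\<bar>c / real l * (exp (- real l / N) - 1)\<bar> \<le> 1 / N"
proof -
  have "1 - real l / N \<le> exp (- real l / N)" "exp (- real l / N) \<le> 1"
    using exp_ge_add_one_self[of "- real l / N"] assms(2) by auto
  then have exp_le: "\<bar>exp (- real l / N) - 1\<bar> \<le> 1" "\<bar>exp (- real l / N) - 1\<bar> \<le> real l / N"
    using assms(2) by (auto simp: divide_nonneg_pos)
  have bound: "\<bar>c / real l * (exp (- real l / N) - 1)\<bar> \<le> \<bar>exp (- real l / N) - 1\<bar> / real l"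
    using assms(1) by (simp add: abs_mult) (intro divide_right_mono mult_left_le_one_le; simp)
  show "\<bar>c / real l * (exp (- real l / N) - 1)\<bar> \<le> 1 / real l"
    using bound divide_right_mono[OF exp_le(1), of "real l"] by simp
  show "\<bar>c / real l * (exp (- real l / N) - 1)\<bar> \<le> 1 / N"
  proof (cases "l = 0")
    case False
    then have "\<bar>exp (- real l / N) - 1\<bar> / real l \<le> (real l / N) / real l"
      using exp_le(2) by (intro divide_right_mono) auto
    with False bound show ?thesis
      by simp
  qed (use assms in simp)
qed

lemma abs_infsum_le_split_at_sqrt:
  fixes g :: "nat \<Rightarrow> real" and N :: real
  assumes "N > 0" and "0 \<notin> S" and summable: "(\<lambda>l. 1 / real l) summable_on S"
    and le_inverse: "\<And>l. l \<in> S \<Longrightarrow> \<bar>g l\<bar> \<le> 1 / real l"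
    and le_inverse_N: "\<And>l. l \<in> S \<Longrightarrow> \<bar>g l\<bar> \<le> 1 / N"
  shows "\<bar>infsum g S\<bar> \<le> N powr (-1/2) + infsum (\<lambda>l. 1 / real l) {l \<in> S. sqrt N < real l}"
proof -
  define S\<^sub>1 where "S\<^sub>1 = {l \<in> S. real l \<le> sqrt N}"
  define S\<^sub>2 where "S\<^sub>2 = {l \<in> S. sqrt N < real l}"
  have S\<^sub>1: "S\<^sub>1 \<subseteq> {1..nat \<lfloor>sqrt N\<rfloor>}"
    using \<open>0 \<notin> S\<close> by (auto simp: S\<^sub>1_def le_nat_floor Suc_le_eq) (metis neq0_conv)
  then have "finite S\<^sub>1"
    by (rule finite_subset) simp
  have summable\<^sub>2: "(\<lambda>l. 1 / real l) summable_on S\<^sub>2"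
    using summable by (rule summable_on_subset_banach) (auto simp: S\<^sub>2_def)
  then have "(\<lambda>l. \<bar>g l\<bar>) summable_on S\<^sub>2"
    by (rule summable_on_comparison_test) (auto simp: S\<^sub>2_def le_inverse)
  then have "g summable_on S\<^sub>2"
    using summable_on_iff_abs_summable_on_real by auto
  moreover have "S = S\<^sub>1 \<union> S\<^sub>2" "S\<^sub>1 \<inter> S\<^sub>2 = {}"
    by (auto simp: S\<^sub>1_def S\<^sub>2_def)
  ultimately have "infsum g S = sum g S\<^sub>1 + infsum g S\<^sub>2"
    using \<open>finite S\<^sub>1\<close> by (simp add: infsum_Un_disjoint)
  moreover have "\<bar>sum g S\<^sub>1\<bar> \<le> N powr (-1/2)"
  proof -
    have "card S\<^sub>1 \<le> nat \<lfloor>sqrt N\<rfloor>"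
      using card_mono[OF _ S\<^sub>1] by simp
    then have "real (card S\<^sub>1) \<le> real (nat \<lfloor>sqrt N\<rfloor>)"
      by simp
    also have "\<dots> \<le> sqrt N"
      using \<open>N > 0\<close> by simp
    finally have "real (card S\<^sub>1) \<le> sqrt N" .
    have "\<bar>sum g S\<^sub>1\<bar> \<le> (\<Sum>l\<in>S\<^sub>1. 1 / N)"
      by (rule order_trans[OF sum_abs sum_mono]) (simp add: S\<^sub>1_def le_inverse_N)
    also have "\<dots> \<le> sqrt N / N"
      using \<open>real (card S\<^sub>1) \<le> sqrt N\<close> \<open>N > 0\<close> by (simp add: divide_right_mono)
    also have "\<dots> = N powr (-1/2)"
      using \<open>N > 0\<close> powr_diff[of N "1/2" 1] by (simp add: powr_half_sqrt)
    finally show ?thesis .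
  qed
  moreover have "norm (infsum g S\<^sub>2) \<le> infsum (\<lambda>l. 1 / real l) S\<^sub>2"
    by (rule norm_infsum_le[OF has_sum_infsum has_sum_infsum])
      (use \<open>g summable_on S\<^sub>2\<close> summable\<^sub>2 in \<open>auto simp: S\<^sub>2_def le_inverse\<close>)
  ultimately show ?thesis
    unfolding S\<^sub>2_def by simp
qed

definition smoothing_bound :: "real \<Rightarrow> real \<Rightarrow> real" where
  "smoothing_bound P N =
     N powr (-1/2) + infsum (\<lambda>l::nat. 1 / real l) {l. real l > sqrt N \<and> smooth P l}"

lemma smoothing_bound_nonneg: "0 \<le> smoothing_bound P N"
  unfolding smoothing_bound_def by (simp add: infsum_nonneg add_nonneg_nonneg)

lemma abs_smoothed_chi_sum_le:
  assumes "N > 0"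
  shows "\<bar>infsum (\<lambda>l::nat. real_of_int (chi d l) / real l * (exp (- real l / N) - 1))
            {l. 0 < l \<and> smooth P l}\<bar> \<le> smoothing_bound P N"
proof -
  have chi: "\<bar>real_of_int (chi d l)\<bar> \<le> 1" for l
    using abs_chi_le_1[of d l] by linarith
  have "\<bar>infsum (\<lambda>l::nat. real_of_int (chi d l) / real l * (exp (- real l / N) - 1))
            {l. 0 < l \<and> smooth P l}\<bar>
        \<le> N powr (-1/2) + infsum (\<lambda>l. 1 / real l) {l \<in> {l. 0 < l \<and> smooth P l}. sqrt N < real l}"
    by (rule abs_infsum_le_split_at_sqrt[OF assms _ summable_on_inverse_smooth])
      (use abs_smoothing_term_le[OF chi assms] in auto)
  also have "{l \<in> {l. 0 < l \<and> smooth P l}. sqrt N < real l} = {l. real l > sqrt N \<and> smooth P l}"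
    using assms by (auto intro: gr0I order.strict_trans1[OF real_sqrt_ge_zero] simp del: real_sqrt_gt_0_iff)
  finally show ?thesis
    unfolding smoothing_bound_def .
qed

definition square_divisor_sum :: "real \<Rightarrow> nat \<Rightarrow> real" where
  "square_divisor_sum \<sigma> m = (\<Sum>v | 0 < v \<and> v\<^sup>2 dvd m. real v powr - \<sigma>)"

lemma finite_square_divisors:
  assumes "0 < m"
  shows "finite {v::nat. v\<^sup>2 dvd m}"
proof (rule finite_subset)
  show "{v::nat. v\<^sup>2 dvd m} \<subseteq> {..m}"
  proof
    fix v assume "v \<in> {v. v\<^sup>2 dvd m}"
    then have "v\<^sup>2 \<le> m"
      using assms by (simp add: dvd_imp_le)
    then show "v \<in> {..m}"
      by (simp add: power2_nat_le_imp_le)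
  qed
qed simp

lemma abs_Delta23_le:
  assumes "2 < n" "0 < N"
  shows "\<bar>Delta23 P N n\<bar> \<le> smoothing_bound P N * square_divisor_sum 1 (n\<^sup>2 - 4)"
proof -
  define V where "V = {v::nat. 0 < v \<and> int (v^2) dvd (int n^2 - 4) \<and> smooth P v
                    \<and> is_disc ((int n^2 - 4) div int (v^2))}"
  define W where "W = {v::nat. 0 < v \<and> v\<^sup>2 dvd n\<^sup>2 - 4}"
  have "2\<^sup>2 < n\<^sup>2"
    using assms(1) by (rule power_strict_mono) simp_all
  then have "int n^2 - 4 = int (n\<^sup>2 - 4)"
    by (simp add: of_nat_diff)
  then have "V \<subseteq> W"
    unfolding V_def W_def by (auto simp only: int_dvd_int_iff)
  have "finite W"
    using finite_square_divisors[of "n\<^sup>2 - 4"] \<open>2\<^sup>2 < n\<^sup>2\<close> by (auto simp: W_def)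
  define I where "I v = infsum (\<lambda>l::nat. real_of_int (chi ((int n^2 - 4) div int (v^2)) l) / real l
                          * (exp (- real l / N) - 1)) {l. 0 < l \<and> smooth P l}" for v :: nat
  have I: "\<bar>I v\<bar> \<le> smoothing_bound P N" for v
    unfolding I_def by (rule abs_smoothed_chi_sum_le[OF assms(2)])
  have "Delta23 P N n = (\<Sum>v\<in>V. 1 / real v * I v)"
    unfolding Delta23_def V_def I_def ..
  then have "\<bar>Delta23 P N n\<bar> \<le> (\<Sum>v\<in>V. 1 / real v * smoothing_bound P N)"
    using I by (simp add: order_trans[OF sum_abs sum_mono] abs_mult divide_right_mono)
  also have "\<dots> \<le> (\<Sum>v\<in>W. 1 / real v * smoothing_bound P N)"
    using \<open>V \<subseteq> W\<close> \<open>finite W\<close> smoothing_bound_nonneg by (intro sum_mono2) auto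
  also have "\<dots> = smoothing_bound P N * square_divisor_sum 1 (n\<^sup>2 - 4)"
    by (simp add: square_divisor_sum_def W_def sum_distrib_left powr_minus_divide)
  finally show ?thesis .
qed

definition zeta_real :: "real \<Rightarrow> real" where
  "zeta_real s = (\<Sum>n. real n powr - s)"

lemma summable_real_powr_neg: "1 < s \<Longrightarrow> summable (\<lambda>n. real n powr - s)"
  by (simp add: summable_real_powr_iff)

lemma sum_le_zeta_real: "1 < s \<Longrightarrow> finite A \<Longrightarrow> (\<Sum>n\<in>A. real n powr - s) \<le> zeta_real s"
  unfolding zeta_real_def by (rule sum_le_suminf[OF summable_real_powr_neg]) auto

lemma one_le_zeta_real: "1 < s \<Longrightarrow> 1 \<le> zeta_real s"
  using sum_le_zeta_real[of s "{1}"] by simp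

lemma convex_on_nonneg_power: "convex_on {0::real..} (\<lambda>x. x ^ k)"
  by (cases "even k") (auto intro: convex_on_subset[OF convex_power_even] convex_power_odd)

lemma power_weighted_sum_le:
  fixes w a :: "'a \<Rightarrow> real"
  assumes "finite W" and w: "\<And>v. v \<in> W \<Longrightarrow> 0 \<le> w v" and a: "\<And>v. v \<in> W \<Longrightarrow> 0 \<le> a v"
    and "sum w W \<le> 1" and "1 \<le> k"
  shows "(\<Sum>v\<in>W. w v * a v) ^ k \<le> (\<Sum>v\<in>W. w v * a v ^ k)"
proof (cases "sum w W = 0")
  case True
  then have "\<forall>v\<in>W. w v = 0"
    using sum_nonneg_eq_0_iff[OF \<open>finite W\<close>] w by blast
  then show ?thesis
    using \<open>1 \<le> k\<close> by (simp add: power_0_left)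
next
  case False
  define c where "c = sum w W"
  have "0 < c" "c \<le> 1"
    using False w \<open>sum w W \<le> 1\<close> by (auto simp: c_def order_less_le sum_nonneg)
  have "(\<Sum>v\<in>W. (w v / c) *\<^sub>R a v) ^ k \<le> (\<Sum>v\<in>W. (w v / c) * a v ^ k)"
    using \<open>0 < c\<close> False w a
    by (intro convex_on_sum[OF \<open>finite W\<close> _ convex_on_nonneg_power])
      (auto simp: c_def sum_divide_distrib[symmetric])
  moreover have "c ^ k = c * c ^ (k - 1)"
    using \<open>1 \<le> k\<close> by (cases k) auto
  ultimately have "(\<Sum>v\<in>W. w v * a v) ^ k \<le> c ^ (k - 1) * (\<Sum>v\<in>W. w v * a v ^ k)"
    using \<open>0 < c\<close> by (simp add: sum_divide_distrib[symmetric] power_divide divide_le_eq mult_ac)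
  also have "\<dots> \<le> (\<Sum>v\<in>W. w v * a v ^ k)"
    using \<open>0 < c\<close> \<open>c \<le> 1\<close> w a
    by (intro mult_left_le_one_le sum_nonneg mult_nonneg_nonneg power_le_one) auto
  finally show ?thesis .
qed

text \<open>Hoelder's inequality, via Jensen with the weights \<open>v powr - s / zeta_real s\<close>.\<close>
lemma power_sum_inverse_le:
  fixes W :: "nat set"
  assumes "finite W" "0 \<notin> W" "1 < s" "1 \<le> k"
  shows "(\<Sum>v\<in>W. real v powr - 1) ^ k
           \<le> zeta_real s ^ (k - 1) * (\<Sum>v\<in>W. real v powr - (real k - (real k - 1) * s))"
proof -
  define Z where "Z = zeta_real s"
  have "1 \<le> Z"
    using assms(3) by (simp add: Z_def one_le_zeta_real)
  define w where "w v = real v powr - s / Z" for v :: nat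
  define a where "a v = Z * real v powr (s - 1)" for v :: nat
  have "sum w W \<le> 1"
    using sum_le_zeta_real[OF assms(3,1)] \<open>1 \<le> Z\<close> by (simp add: w_def Z_def sum_divide_distrib[symmetric])
  then have "(\<Sum>v\<in>W. w v * a v) ^ k \<le> (\<Sum>v\<in>W. w v * a v ^ k)"
    using \<open>1 \<le> Z\<close> assms(1,4) by (intro power_weighted_sum_le) (auto simp: w_def a_def)
  moreover have "w v * a v = real v powr - 1" if "v \<in> W" for v
    using that assms(2) \<open>1 \<le> Z\<close> by (auto simp: w_def a_def powr_add[symmetric] gr0I)
  moreover have "w v * a v ^ k = Z ^ (k - 1) * real v powr - (real k - (real k - 1) * s)"
    if "v \<in> W" for v
  proof -
    have "0 < real v"
      using that assms(2) by (auto intro: gr0I)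
    then have "a v ^ k = Z ^ k * real v powr ((s - 1) * real k)"
      by (simp add: a_def power_mult_distrib powr_powr[symmetric] powr_realpow)
    moreover have "Z ^ k = Z * Z ^ (k - 1)"
      using assms(4) by (cases k) auto
    moreover have "real v powr - s * real v powr ((s - 1) * real k)
                     = real v powr - (real k - (real k - 1) * s)"
      using \<open>0 < real v\<close> by (simp add: powr_add[symmetric] algebra_simps)
    ultimately show ?thesis
      using \<open>1 \<le> Z\<close> by (simp add: w_def)
  qed
  ultimately show ?thesis
    by (simp add: Z_def sum_distrib_left)
qed

lemma square_divisor_sum_power_le:
  assumes "0 < m" "1 < s" "1 \<le> k"
  shows "square_divisor_sum 1 m ^ k
           \<le> zeta_real s ^ (k - 1) * square_divisor_sum (real k - (real k - 1) * s) m"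
proof -
  have "finite {v. 0 < v \<and> v\<^sup>2 dvd m}"
    using finite_square_divisors[OF assms(1)] by (auto elim: finite_subset[rotated])
  then show ?thesis
    unfolding square_divisor_sum_def using assms(2,3) by (intro power_sum_inverse_le) auto
qed

lemma dvd_square_rootE:
  fixes d :: nat
  assumes "0 < d"
  obtains r where "0 < r" "d \<le> r\<^sup>2" "\<And>v. d dvd v\<^sup>2 \<Longrightarrow> r dvd v"
proof -
  define r where "r = (LEAST r. 0 < r \<and> d dvd r\<^sup>2)"
  have r: "0 < r \<and> d dvd r\<^sup>2"
    unfolding r_def by (rule LeastI[of _ d]) (use assms in \<open>simp add: power2_eq_square\<close>)
  have "r dvd v" if "d dvd v\<^sup>2" for v
  proof (cases "v = 0")
    case False
    have "d dvd (gcd v r)\<^sup>2"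
      using that r by (simp flip: gcd_exp)
    then have "r \<le> gcd v r"
      unfolding r_def using False by (intro Least_le) simp
    moreover have "gcd v r \<le> r"
      using r by simp
    ultimately show "r dvd v"
      by (metis antisym gcd_dvd1)
  qed simp
  moreover have "d \<le> r\<^sup>2"
    using r by (simp add: dvd_imp_le)
  ultimately show ?thesis
    using r that by blast
qed

lemma sum_square_multiples_powr_le:
  fixes d :: nat and s :: real
  assumes "0 < d" "1 < s"
  shows "(\<Sum>v | 0 < v \<and> v \<le> d \<and> d dvd v\<^sup>2. real v powr - s) \<le> zeta_real s * real d powr (- s / 2)"
proof -
  obtain r where r: "0 < r" "d \<le> r\<^sup>2" "\<And>v. d dvd v\<^sup>2 \<Longrightarrow> r dvd v"
    using dvd_square_rootE[OF assms(1)] by blast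
  have multiples: "{v. 0 < v \<and> v \<le> d \<and> d dvd v\<^sup>2} \<subseteq> (\<lambda>j. r * j) ` {1..d}"
  proof
    fix v assume v: "v \<in> {v. 0 < v \<and> v \<le> d \<and> d dvd v\<^sup>2}"
    then obtain j where j: "v = r * j"
      using r(3) by blast
    have "j \<le> d"
      using j r(1) v by (auto intro: order.trans[of j v d])
    moreover have "j \<noteq> 0"
      using j v by auto
    ultimately show "v \<in> (\<lambda>j. r * j) ` {1..d}"
      using j by auto
  qed
  have "real r powr - s = (real r powr 2) powr (- s / 2)"
    by (subst powr_powr) simp
  also have "\<dots> = (real r ^ 2) powr (- s / 2)"
    using r(1) by (simp add: powr_numeral)
  also have "\<dots> \<le> real d powr (- s / 2)"
    using assms r(2) by (intro powr_mono2') (simp_all flip: of_nat_power)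
  finally have r_powr: "real r powr - s \<le> real d powr (- s / 2)" .
  have "(\<Sum>v | 0 < v \<and> v \<le> d \<and> d dvd v\<^sup>2. real v powr - s)
          \<le> (\<Sum>v\<in>(\<lambda>j. r * j) ` {1..d}. real v powr - s)"
    using multiples by (intro sum_mono2) auto
  also have "\<dots> \<le> (\<Sum>j=1..d. real (r * j) powr - s)"
    using sum_image_le[of "{1..d}" "\<lambda>v. real v powr - s" "\<lambda>j. r * j"] by (simp add: comp_def)
  also have "\<dots> = real r powr - s * (\<Sum>j=1..d. real j powr - s)"
    by (simp add: powr_mult sum_distrib_left)
  also have "\<dots> \<le> real d powr (- s / 2) * zeta_real s"
    using r_powr assms(2) by (intro mult_mono sum_le_zeta_real) (simp_all add: sum_nonneg)
  finally show ?thesis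
    by (simp add: mult.commute)
qed

lemma sum_square_multiples_powr_le':
  fixes d :: nat and s \<gamma> :: real
  assumes "0 < d" "1 < s" "\<gamma> \<le> s"
  shows "(\<Sum>v | 0 < v \<and> v \<le> d \<and> d dvd v\<^sup>2. real v powr - \<gamma>) \<le> zeta_real s * real d powr (s / 2 - \<gamma>)"
proof -
  have "(\<Sum>v | 0 < v \<and> v \<le> d \<and> d dvd v\<^sup>2. real v powr - \<gamma>)
          \<le> (\<Sum>v | 0 < v \<and> v \<le> d \<and> d dvd v\<^sup>2. real v powr - s * real d powr (s - \<gamma>))"
  proof (rule sum_mono)
    fix v assume "v \<in> {v. 0 < v \<and> v \<le> d \<and> d dvd v\<^sup>2}"
    then have "0 < real v" "real v \<le> real d"
      by auto
    then have "real v powr - \<gamma> = real v powr - s * real v powr (s - \<gamma>)"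
      by (simp add: powr_add[symmetric])
    also have "\<dots> \<le> real v powr - s * real d powr (s - \<gamma>)"
      using \<open>0 < real v\<close> \<open>real v \<le> real d\<close> assms(3) by (intro mult_left_mono powr_mono2) auto
    finally show "real v powr - \<gamma> \<le> real v powr - s * real d powr (s - \<gamma>)" .
  qed
  also have "\<dots> \<le> zeta_real s * real d powr (- s / 2) * real d powr (s - \<gamma>)"
    using sum_square_multiples_powr_le[OF assms(1,2)]
    by (simp add: sum_distrib_right[symmetric] mult_right_mono)
  also have "\<dots> = zeta_real s * real d powr (s / 2 - \<gamma>)"
    using assms(1) by (simp add: powr_add[symmetric])
  finally show ?thesis .
qed

lemma square_dvd_productE:
  fixes v a b :: nat
  assumes "v\<^sup>2 dvd a * b"
  obtains d where "v \<le> d" "d dvd v\<^sup>2" "d dvd a \<or> d dvd b"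
proof -
  obtain x y where xy: "v\<^sup>2 = x * y" "x dvd a" "y dvd b"
    using dvd_productE[OF assms] .
  have "v \<le> x \<or> v \<le> y"
  proof (rule ccontr)
    assume "\<not> (v \<le> x \<or> v \<le> y)"
    then have "x * y < v * v"
      by (intro mult_strict_mono) auto
    with xy show False
      by (simp add: power2_eq_square)
  qed
  with xy that show ?thesis
    by (metis dvd_triv_left dvd_triv_right)
qed

lemma card_multiples_le:
  fixes f :: "'a \<Rightarrow> nat" and d M :: nat
  assumes "0 < d" "inj_on f A" "f ` A \<subseteq> {1..M}"
  shows "real (card {a \<in> A. d dvd f a}) \<le> real M / real d"
proof -
  have "f ` {a \<in> A. d dvd f a} \<subseteq> (\<lambda>j. d * j) ` {1..M div d}"
  proof
    fix m assume "m \<in> f ` {a \<in> A. d dvd f a}"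
    then obtain j where j: "m = d * j" "1 \<le> m" "m \<le> M"
      using assms(3) by (auto elim!: dvdE)
    moreover from j have "j \<le> M div d"
      using assms(1) by (simp add: less_eq_div_iff_mult_less_eq mult.commute)
    ultimately have "j \<in> {1..M div d}"
      by (cases "j = 0") auto
    with j show "m \<in> (\<lambda>j. d * j) ` {1..M div d}"
      by blast
  qed
  then have "card {a \<in> A. d dvd f a} \<le> card ((\<lambda>j. d * j) ` {1..M div d})"
    using assms(2) by (intro card_inj_on_le[OF inj_on_subset[OF assms(2)]]) auto
  also have "\<dots> \<le> M div d"
    using card_image_le[of "{1..M div d}" "\<lambda>j. d * j"] by simp
  finally have "real (card {a \<in> A. d dvd f a}) \<le> real (M div d)"
    by simp
  also have "\<dots> \<le> real M / real d"
    by (rule of_nat_div_le_of_nat)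
  finally show ?thesis .
qed

lemma square_divisor_sum_le_sum_square_multiples:
  fixes n M :: nat
  assumes "2 < n" "n + 2 \<le> M"
  shows "square_divisor_sum \<gamma> (n\<^sup>2 - 4)
           \<le> (\<Sum>d | d \<in> {1..M} \<and> (d dvd n - 2 \<or> d dvd n + 2).
                 \<Sum>v | 0 < v \<and> v \<le> d \<and> d dvd v\<^sup>2. real v powr - \<gamma>)"
proof -
  define D where "D = {d \<in> {1..M}. d dvd n - 2 \<or> d dvd n + 2}"
  define E where "E d = {v. 0 < v \<and> v \<le> d \<and> d dvd v\<^sup>2}" for d :: nat
  have "finite D" "\<And>d. finite (E d)"
    by (auto simp: D_def E_def)
  have "n\<^sup>2 - 4 = (n - 2) * (n + 2)"
    using assms(1) by (cases n) (auto simp: power2_eq_square algebra_simps)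
  have "{v. 0 < v \<and> v\<^sup>2 dvd n\<^sup>2 - 4} \<subseteq> snd ` (SIGMA d:D. E d)"
  proof
    fix v assume "v \<in> {v. 0 < v \<and> v\<^sup>2 dvd n\<^sup>2 - 4}"
    then have v: "0 < v" "v\<^sup>2 dvd (n - 2) * (n + 2)"
      using \<open>n\<^sup>2 - 4 = _\<close> by auto
    then obtain d where d: "v \<le> d" "d dvd v\<^sup>2" "d dvd n - 2 \<or> d dvd n + 2"
      by (elim square_dvd_productE)
    then have "d \<le> n + 2"
      using assms(1) by (auto dest!: dvd_imp_le)
    with d v assms(2) have "(d, v) \<in> (SIGMA d:D. E d)"
      by (auto simp: D_def E_def)
    then show "v \<in> snd ` (SIGMA d:D. E d)"
      by force
  qed
  then have "square_divisor_sum \<gamma> (n\<^sup>2 - 4) \<le> (\<Sum>v\<in>snd ` (SIGMA d:D. E d). real v powr - \<gamma>)"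
    unfolding square_divisor_sum_def using \<open>finite D\<close> \<open>\<And>d. finite (E d)\<close>
    by (intro sum_mono2) auto
  also have "\<dots> \<le> (\<Sum>(d, v)\<in>(SIGMA d:D. E d). real v powr - \<gamma>)"
    using sum_image_le[of "SIGMA d:D. E d" "\<lambda>v. real v powr - \<gamma>" snd] \<open>finite D\<close> \<open>\<And>d. finite (E d)\<close>
    by (simp add: comp_def case_prod_beta)
  also have "\<dots> = (\<Sum>d\<in>D. \<Sum>v\<in>E d. real v powr - \<gamma>)"
    using \<open>finite D\<close> \<open>\<And>d. finite (E d)\<close> by (simp add: sum.Sigma)
  finally show ?thesis
    by (simp add: D_def E_def)
qed

lemma card_shifted_multiples_le:
  fixes d X :: nat
  assumes "0 < d"
  shows "real (card {n \<in> {3..X}. d dvd n - 2 \<or> d dvd n + 2}) \<le> 4 * real X / real d"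
proof (cases "X = 0")
  case False
  have "card {n \<in> {3..X}. d dvd n - 2 \<or> d dvd n + 2}
          \<le> card {n \<in> {3..X}. d dvd n - 2} + card {n \<in> {3..X}. d dvd n + 2}"
    by (rule order_trans[OF _ card_Un_le]) (auto intro: card_mono)
  moreover have "real (card {n \<in> {3..X}. d dvd n - 2}) \<le> real X / real d"
    using assms by (rule card_multiples_le) (auto simp: inj_on_def)
  moreover have "real (card {n \<in> {3..X}. d dvd n + 2}) \<le> real (X + 2) / real d"
    using assms by (rule card_multiples_le) (auto simp: inj_on_def)
  moreover have "real X / real d + real (X + 2) / real d \<le> 4 * real X / real d"
    using False by (simp add: add_divide_distrib[symmetric] divide_right_mono)
  ultimately show ?thesis
    by linarith
qed simp

lemma sum_square_divisor_sum_le: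
  fixes s \<gamma> :: real and X :: nat
  assumes "1 < s" "s / 2 < \<gamma>" "\<gamma> \<le> s"
  shows "(\<Sum>n=3..X. square_divisor_sum \<gamma> (n\<^sup>2 - 4))
           \<le> 4 * zeta_real s * zeta_real (1 + \<gamma> - s / 2) * real X"
proof -
  define H where "H d = (\<Sum>v | 0 < v \<and> v \<le> d \<and> d dvd v\<^sup>2. real v powr - \<gamma>)" for d :: nat
  define count where "count d = card {n \<in> {3..X}. d dvd n - 2 \<or> d dvd n + 2}" for d
  have "(\<Sum>n=3..X. square_divisor_sum \<gamma> (n\<^sup>2 - 4))
          \<le> (\<Sum>n=3..X. \<Sum>d | d \<in> {1..X + 2} \<and> (d dvd n - 2 \<or> d dvd n + 2). H d)"
    unfolding H_def by (intro sum_mono square_divisor_sum_le_sum_square_multiples) auto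
  also have "\<dots> = (\<Sum>d=1..X + 2. real (count d) * H d)"
    unfolding count_def by (subst sum.swap_restrict) auto
  also have "\<dots> \<le> (\<Sum>d=1..X + 2. 4 * real X / real d * (zeta_real s * real d powr (s / 2 - \<gamma>)))"
    using assms card_shifted_multiples_le
    by (intro sum_mono mult_mono) (auto simp: count_def H_def sum_square_multiples_powr_le' intro: sum_nonneg)
  also have "\<dots> = 4 * zeta_real s * real X * (\<Sum>d=1..X + 2. real d powr - (1 + \<gamma> - s / 2))"
    unfolding sum_distrib_left
  proof (rule sum.cong[OF refl])
    fix d assume "d \<in> {1..X + 2}"
    then have "real d powr (s / 2 - \<gamma>) = real d powr - (1 + \<gamma> - s / 2) * real d"
      using powr_add[of "real d" "- (1 + \<gamma> - s / 2)" 1] by (simp add: algebra_simps)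
    with \<open>d \<in> {1..X + 2}\<close>
    show "4 * real X / real d * (zeta_real s * real d powr (s / 2 - \<gamma>))
            = 4 * zeta_real s * real X * real d powr - (1 + \<gamma> - s / 2)"
      by simp
  qed
  also have "\<dots> \<le> 4 * zeta_real s * real X * zeta_real (1 + \<gamma> - s / 2)"
    using assms one_le_zeta_real[OF assms(1)] by (intro mult_left_mono sum_le_zeta_real) auto
  finally show ?thesis
    by (simp add: mult_ac)
qed

lemma sum_square_divisor_sum_power_le:
  fixes k :: nat
  assumes "1 \<le> k"
  obtains K where "0 < K" "\<And>X. (\<Sum>n=3..X. square_divisor_sum 1 (n\<^sup>2 - 4) ^ k) \<le> K * real X"
proof -
  define s where "s = 1 + 1 / (2 * real k)"
  define \<gamma> where "\<gamma> = real k - (real k - 1) * s"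
  have "\<gamma> = 1 / 2 + 1 / (2 * real k)"
    using assms by (simp add: \<gamma>_def s_def field_simps)
  then have "1 < s" "s / 2 < \<gamma>" "\<gamma> \<le> s"
    using assms by (auto simp: s_def field_simps)
  define K where "K = 4 * zeta_real s ^ k * zeta_real (1 + \<gamma> - s / 2)"
  have "1 \<le> zeta_real s" "1 \<le> zeta_real (1 + \<gamma> - s / 2)"
    using \<open>1 < s\<close> \<open>s / 2 < \<gamma>\<close> by (auto intro: one_le_zeta_real)
  then have "0 < K"
    by (simp add: K_def)
  moreover have "(\<Sum>n=3..X. square_divisor_sum 1 (n\<^sup>2 - 4) ^ k) \<le> K * real X" for X
  proof -
    have "square_divisor_sum 1 (n\<^sup>2 - 4) ^ k \<le> zeta_real s ^ (k - 1) * square_divisor_sum \<gamma> (n\<^sup>2 - 4)"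
      if "n \<in> {3..X}" for n
    proof -
      have "3\<^sup>2 \<le> n\<^sup>2"
        using that power_mono[of 3 n 2] by simp
      then show ?thesis
        unfolding \<gamma>_def using \<open>1 < s\<close> assms by (intro square_divisor_sum_power_le) auto
    qed
    then have "(\<Sum>n=3..X. square_divisor_sum 1 (n\<^sup>2 - 4) ^ k)
                 \<le> zeta_real s ^ (k - 1) * (\<Sum>n=3..X. square_divisor_sum \<gamma> (n\<^sup>2 - 4))"
      unfolding sum_distrib_left by (rule sum_mono)
    also have "\<dots> \<le> zeta_real s ^ (k - 1) * (4 * zeta_real s * zeta_real (1 + \<gamma> - s / 2) * real X)"
      using \<open>1 < s\<close> \<open>s / 2 < \<gamma>\<close> \<open>\<gamma> \<le> s\<close> \<open>1 \<le> zeta_real s\<close>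
      by (intro mult_left_mono sum_square_divisor_sum_le) auto
    also have "\<dots> = K * real X"
      using assms by (cases k) (simp_all add: K_def mult_ac)
    finally show ?thesis .
  qed
  ultimately show ?thesis
    using that by blast
qed

lemma root_le_of_le_power:
  fixes M K A :: real and k :: nat
  assumes "0 \<le> M" "M \<le> K * A ^ k" "0 \<le> K" "0 \<le> A" "0 < k"
  shows "M powr (1 / real k) \<le> K powr (1 / real k) * A"
proof -
  have "M powr (1 / real k) \<le> (K * A ^ k) powr (1 / real k)"
    using assms by (intro powr_mono2) auto
  also have "\<dots> = K powr (1 / real k) * (A ^ k) powr (1 / real k)"
    using assms by (simp add: powr_mult)
  also have "(A ^ k) powr (1 / real k) = A"
  proof (cases "A = 0")
    case False
    with assms show ?thesis
      by (simp add: powr_realpow[symmetric] powr_powr)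
  qed (use assms in simp)
  finally show ?thesis .
qed

lemma mean_power_Delta23_le:
  fixes k :: nat and K x N :: real
  assumes "0 < k" "0 < K" "\<And>X. (\<Sum>n=3..X. square_divisor_sum 1 (n\<^sup>2 - 4) ^ k) \<le> K * real X"
    and "1 \<le> x" "0 < N"
  shows "((1 / x) * (\<Sum>n\<in>{n. 2 < n \<and> real n \<le> x}. \<bar>Delta23 P N n\<bar> ^ k)) powr (1 / real k)
           \<le> K powr (1 / real k) * smoothing_bound P N"
proof (rule root_le_of_le_power)
  define X where "X = nat \<lfloor>x\<rfloor>"
  have X: "{n. 2 < n \<and> real n \<le> x} = {3..X}"
    using \<open>1 \<le> x\<close> by (auto simp: X_def le_nat_iff le_floor_iff)
  have "(\<Sum>n=3..X. \<bar>Delta23 P N n\<bar> ^ k)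
          \<le> (\<Sum>n=3..X. (smoothing_bound P N * square_divisor_sum 1 (n\<^sup>2 - 4)) ^ k)"
    using \<open>0 < N\<close> by (intro sum_mono power_mono abs_Delta23_le) auto
  also have "\<dots> = smoothing_bound P N ^ k * (\<Sum>n=3..X. square_divisor_sum 1 (n\<^sup>2 - 4) ^ k)"
    by (simp add: power_mult_distrib sum_distrib_left)
  also have "\<dots> \<le> smoothing_bound P N ^ k * (K * x)"
    using assms(3)[of X] \<open>1 \<le> x\<close> \<open>0 < K\<close> smoothing_bound_nonneg
    by (intro mult_left_mono order.trans[OF _ mult_left_mono[of "real X" x K]]) (auto simp: X_def)
  finally show "(1 / x) * (\<Sum>n\<in>{n. 2 < n \<and> real n \<le> x}. \<bar>Delta23 P N n\<bar> ^ k)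
                  \<le> K * smoothing_bound P N ^ k"
    using \<open>1 \<le> x\<close> by (simp add: X field_simps)
qed (use assms smoothing_bound_nonneg in \<open>auto intro!: divide_nonneg_nonneg sum_nonneg\<close>)

theorem lemma3p3:
  fixes q :: nat
  assumes "q > 1"
  shows "\<exists>C>0. \<forall>P x N :: real. P \<ge> 2 \<longrightarrow> x \<ge> 1 \<longrightarrow> N \<ge> 1 \<longrightarrow>
     ((1 / x) * (\<Sum>n\<in>{n::nat. 2 < n \<and> real n \<le> x}. \<bar>Delta23 P N n\<bar> ^ (2 * q)))
        powr (1 / real (2 * q))
     \<le> C * (N powr (-1/2) + infsum (\<lambda>l::nat. 1 / real l) {l. real l > sqrt N \<and> smooth P l})"
proof -
  obtain K where "0 < K"
    and "\<And>X. (\<Sum>n=3..X. square_divisor_sum 1 (n\<^sup>2 - 4) ^ (2 * q)) \<le> K * real X"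
    using sum_square_divisor_sum_power_le[of "2 * q"] assms by auto
  with assms have "(1 / x * (\<Sum>n\<in>{n. 2 < n \<and> real n \<le> x}. \<bar>Delta23 P N n\<bar> ^ (2 * q)))
                     powr (1 / real (2 * q)) \<le> K powr (1 / real (2 * q)) * smoothing_bound P N"
    if "1 \<le> x" "1 \<le> N" for P x N
    using that by (intro mean_power_Delta23_le) auto
  then show ?thesis
    using \<open>0 < K\<close> unfolding smoothing_bound_def
    by (intro exI[of _ "K powr (1 / real (2 * q))"]) auto
qed

end
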